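(* Let $F\in\Gamma_0^s(\mathbb{R}_+)$ and $a\in(0,1]$. If $(\hat F)^a$ satisfies the triangle inequality on $[0,+\infty)$, i.e. $\hat F^a(r,t)\le \hat F^a(r,s)+\hat F^a(s,t)$ for all $r,s,t\ge0$, then $T_a(F)(s)\ge F(s)$ for every $s\ge 0$.
   Context: $\Gamma_0(\mathbb{R}_+)$ is the set of functions $F:[0,\infty)\to[0,\infty]$ that are convex, lower semicontinuous, with $F(1)=0$. For $F\in\Gamma_0(\mathbb{R}_+)$: $\mathrm{rec}(F)(r)=\lim_{\alpha\to\infty}F(1+\alpha r)/\alpha$, $F'_\infty:=\mathrm{rec}(F)(1)$; the perspective function is $\hat F(r,t)=tF(r/t)$ for $t>0$, $\hat F(r,0)=\mathrm{rec}(F)(r)$; the reverse entropy is $R(s)=sF(1/s)$ for $s>0$, $R(0)=F'_\infty$. $\Gamma_0^s(\mathbb{R}_+)$ is the set of $F\in\Gamma_0(\mathbb{R}_+)$ with $F=R$; for such $F$, $\hat F(r,t)=\hat F(t,r)$ and $\hat F(1,t)=F(t)$. The marginal perspective function $H_F$ is the lower semicontinuous envelope of $\tilde H_F(r_1,r_2)=\inf_{\theta>0}[\hat F(\theta,r_1)+\hat F(\theta,r_2)]$. For $a\in(0,1]$, $T_a:\Gamma_0(\mathbb{R}_+)\to\Gamma_0^s(\mathbb{R}_+)$ is $T_a(F)(s)=2^{1/a-1}H_F(1,s)$. *)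

theory Defs
  imports "HOL-Analysis.Analysis"
begin

text \<open>Functions F : [0,\<infinity>) \<rightarrow> [0,\<infinity>] are modelled as real \<Rightarrow> ereal; only values on {0..} matter.\<close>

definition econvex_on :: "'a::real_vector set \<Rightarrow> ('a \<Rightarrow> ereal) \<Rightarrow> bool" where
  "econvex_on S f \<longleftrightarrow> (\<forall>x\<in>S. \<forall>y\<in>S. \<forall>u::real. 0 \<le> u \<and> u \<le> 1 \<longrightarrow>
      f ((1 - u) *\<^sub>R x + u *\<^sub>R y) \<le> ereal (1 - u) * f x + ereal u * f y)"

definition lsc_on :: "'a::topological_space set \<Rightarrow> ('a \<Rightarrow> ereal) \<Rightarrow> bool" where
  "lsc_on S f \<longleftrightarrow> (\<forall>x\<in>S. \<forall>c. c < f x \<longrightarrow> eventually (\<lambda>y. c < f y) (at x within S))"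

definition Gamma0 :: "(real \<Rightarrow> ereal) set" where
  "Gamma0 = {F. (\<forall>x\<ge>0. 0 \<le> F x) \<and> econvex_on {0..} F \<and> lsc_on {0..} F \<and> F 1 = 0}"

definition recF :: "(real \<Rightarrow> ereal) \<Rightarrow> real \<Rightarrow> ereal" where
  "recF F r = Lim at_top (\<lambda>\<alpha>::real. F (1 + \<alpha> * r) / ereal \<alpha>)"

definition Finf :: "(real \<Rightarrow> ereal) \<Rightarrow> ereal" where
  "Finf F = recF F 1"

definition persp :: "(real \<Rightarrow> ereal) \<Rightarrow> real \<Rightarrow> real \<Rightarrow> ereal" where
  "persp F r t = (if t > 0 then ereal t * F (r / t) else recF F r)"

definition reverse_entropy :: "(real \<Rightarrow> ereal) \<Rightarrow> real \<Rightarrow> ereal" where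
  "reverse_entropy F s = (if s > 0 then ereal s * F (1 / s) else Finf F)"

definition Gamma0s :: "(real \<Rightarrow> ereal) set" where
  "Gamma0s = {F \<in> Gamma0. \<forall>s\<ge>0. F s = reverse_entropy F s}"

definition tildeH :: "(real \<Rightarrow> ereal) \<Rightarrow> real \<times> real \<Rightarrow> ereal" where
  "tildeH F p = (INF \<theta>\<in>{0<..}. persp F \<theta> (fst p) + persp F \<theta> (snd p))"

definition lsc_envelope :: "'a::topological_space set \<Rightarrow> ('a \<Rightarrow> ereal) \<Rightarrow> 'a \<Rightarrow> ereal" where
  "lsc_envelope S f x = (SUP g\<in>{g. lsc_on S g \<and> (\<forall>y\<in>S. g y \<le> f y)}. g x)"

definition HF :: "(real \<Rightarrow> ereal) \<Rightarrow> real \<Rightarrow> real \<Rightarrow> ereal" where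
  "HF F r1 r2 = lsc_envelope ({0..} \<times> {0..}) (tildeH F) (r1, r2)"

definition epowr :: "ereal \<Rightarrow> real \<Rightarrow> ereal" where
  "epowr x a = (if x = \<infinity> then \<infinity> else ereal (real_of_ereal x powr a))"

definition Ta :: "real \<Rightarrow> (real \<Rightarrow> ereal) \<Rightarrow> real \<Rightarrow> ereal" where
  "Ta a F s = ereal (2 powr (1 / a - 1)) * HF F 1 s"

end

theory Submission
  imports Defs "HOL-Real_Asymp.Real_Asymp"
begin

text \<open>Write \<open>F\<^sup>^\<close> for the perspective of F. Since F is symmetric, so is \<open>F\<^sup>^\<close>, and the
  triangle inequality through an intermediate point \<open>\<theta>\<close> reads
  \<open>F\<^sup>^(r\<^sub>1, r\<^sub>2)\<^sup>a \<le> F\<^sup>^(\<theta>, r\<^sub>1)\<^sup>a + F\<^sup>^(\<theta>, r\<^sub>2)\<^sup>a\<close>. Concavity of \<open>t \<mapsto> t\<^sup>a\<close> turns this into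
  \<open>C F\<^sup>^(r\<^sub>1, r\<^sub>2) \<le> F\<^sup>^(\<theta>, r\<^sub>1) + F\<^sup>^(\<theta>, r\<^sub>2)\<close> with \<open>C = 2 powr (1 - 1/a)\<close>, so taking the
  infimum over \<open>\<theta>\<close> shows that \<open>C F\<^sup>^\<close> minorizes the marginal perspective \<open>tildeH F\<close>. Being lower
  semicontinuous, it also lies below the envelope \<open>HF F\<close>; at \<open>(1, s)\<close> it equals \<open>C F(s)\<close>, and
  \<open>Ta a\<close> multiplies \<open>HF F\<close> by exactly \<open>1/C\<close>.\<close>

lemma powr_add_le_mean_powr:
  fixes x y a :: real
  assumes a: "0 < a" "a \<le> 1" and nn: "0 \<le> x" "0 \<le> y"
  shows "x powr a + y powr a \<le> 2 * ((x + y) / 2) powr a"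
proof (cases "x + y = 0")
  case True
  then have "x = 0" "y = 0" using nn by auto
  then show ?thesis using a by simp
next
  case False
  define m where "m = (x + y) / 2"
  have m: "m > 0" using False nn by (simp add: m_def)
  have young: "z powr a * m powr (1 - a) \<le> a * z + (1 - a) * m" if "0 \<le> z" for z
    using that Youngs_inequality_0[of a "1 - a" z m] a m by (cases "z = 0") auto
  have "a * x + (1 - a) * m + (a * y + (1 - a) * m) = 2 * m" by (simp add: m_def algebra_simps)
  then have "(x powr a + y powr a) * m powr (1 - a) \<le> 2 * m"
    using young[OF nn(1)] young[OF nn(2)] by (simp add: algebra_simps)
  moreover have "m powr (1 - a) = m / m powr a" using m by (simp add: powr_diff)
  ultimately have "(x powr a + y powr a) * m \<le> 2 * m powr a * m"
    using m by (simp add: field_simps)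
  then have "x powr a + y powr a \<le> 2 * m powr a" using m by simp
  then show ?thesis by (simp add: m_def)
qed

lemma scaled_le_add_if_powr_le_add_powr:
  fixes p x y a :: real
  assumes a: "0 < a" "a \<le> 1" and nn: "0 \<le> p" "0 \<le> x" "0 \<le> y"
    and tri: "p powr a \<le> x powr a + y powr a"
  shows "2 powr (1 - 1/a) * p \<le> x + y"
proof -
  have "p powr a \<le> 2 * ((x + y) / 2) powr a"
    using tri powr_add_le_mean_powr[OF a nn(2,3)] by linarith
  then have "(p powr a) powr (1/a) \<le> (2 * ((x + y) / 2) powr a) powr (1/a)"
    using a nn by (intro powr_mono2) auto
  then have "p \<le> 2 powr (1/a) * ((x + y) / 2)"
    using a nn by (simp add: powr_powr powr_mult)
  then have "2 powr (1 - 1/a) * p \<le> 2 powr (1 - 1/a) * 2 powr (1/a) * ((x + y) / 2)"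
    by (simp add: mult.assoc)
  also have "\<dots> = x + y" by (simp flip: powr_add)
  finally show ?thesis .
qed

lemma ereal_scaled_le_add_if_epowr_le_add_epowr:
  fixes P X Y :: ereal and a :: real
  assumes a: "0 < a" "a \<le> 1" and nn: "0 \<le> P" "0 \<le> X" "0 \<le> Y"
    and tri: "epowr P a \<le> epowr X a + epowr Y a"
  shows "ereal (2 powr (1 - 1/a)) * P \<le> X + Y"
proof (cases "X = \<infinity> \<or> Y = \<infinity>")
  case True
  then show ?thesis using nn by auto
next
  case False
  then obtain x y where xy: "X = ereal x" "Y = ereal y" using nn by (cases X; cases Y) auto
  then obtain p where p: "P = ereal p" using tri nn by (cases P) (auto simp: epowr_def)
  have "p powr a \<le> x powr a + y powr a" using tri xy p by (simp add: epowr_def)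
  from scaled_le_add_if_powr_le_add_powr[OF a _ _ _ this] show ?thesis using nn xy p by simp
qed

lemma lsc_onD_open:
  assumes "lsc_on S f" "x \<in> S" "c < f x"
  obtains T where "open T" "x \<in> T" "\<And>y. y \<in> T \<Longrightarrow> y \<in> S \<Longrightarrow> c < f y"
proof -
  have "eventually (\<lambda>y. c < f y) (at x within S)" using assms unfolding lsc_on_def by blast
  then obtain T where "open T" "x \<in> T" "\<forall>y\<in>T. y \<noteq> x \<longrightarrow> y \<in> S \<longrightarrow> c < f y"
    unfolding eventually_at_topological by blast
  then show thesis using that assms(3) by metis
qed

lemma lsc_onI_open:
  assumes "\<And>x c. x \<in> S \<Longrightarrow> c < f x \<Longrightarrow> \<exists>T. open T \<and> x \<in> T \<and> (\<forall>y\<in>T. y \<in> S \<longrightarrow> c < f y)"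
  shows "lsc_on S f"
  unfolding lsc_on_def eventually_at_topological using assms by metis

lemma lsc_on_compose_continuous:
  assumes f: "lsc_on T f" and g: "continuous_on S g" "g ` S \<subseteq> T"
  shows "lsc_on S (\<lambda>x. f (g x))"
proof (rule lsc_onI_open)
  fix x c assume x: "x \<in> S" and c: "c < f (g x)"
  obtain U where U: "open U" "g x \<in> U" "\<And>u. u \<in> U \<Longrightarrow> u \<in> T \<Longrightarrow> c < f u"
    using lsc_onD_open[OF f _ c] x g(2) by blast
  obtain V where V: "open V" "V \<inter> S = g -` U \<inter> S"
    using g(1) U(1) unfolding continuous_on_open_invariant by blast
  show "\<exists>V. open V \<and> x \<in> V \<and> (\<forall>y\<in>V. y \<in> S \<longrightarrow> c < f (g y))"
    using V U x g(2) by (intro exI[of _ V]) blast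
qed

lemma lsc_on_mult_continuous:
  fixes h :: "'a::topological_space \<Rightarrow> real"
  assumes f: "lsc_on S f" "\<And>x. x \<in> S \<Longrightarrow> 0 \<le> f x"
    and h: "continuous_on S h" "\<And>x. x \<in> S \<Longrightarrow> 0 < h x"
  shows "lsc_on S (\<lambda>x. ereal (h x) * f x)"
proof (rule lsc_onI_open)
  fix x c assume x: "x \<in> S" and c: "c < ereal (h x) * f x"
  show "\<exists>T. open T \<and> x \<in> T \<and> (\<forall>y\<in>T. y \<in> S \<longrightarrow> c < ereal (h y) * f y)"
  proof (cases "c < 0")
    case True
    have "0 \<le> ereal (h y) * f y" if "y \<in> S" for y
      using f(2)[OF that] h(2)[OF that] by (simp add: mult_nonneg_nonneg)
    then show ?thesis using True by (intro exI[of _ UNIV]) (auto intro: less_le_trans)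
  next
    case False
    then obtain c0 where c0: "c = ereal c0" "0 \<le> c0" using c by (cases c) auto
    have "ereal (c0 / h x) < f x"
    proof (rule ccontr)
      assume "\<not> ?thesis"
      then have "ereal (h x) * f x \<le> ereal (h x) * ereal (c0 / h x)"
        using h(2)[OF x] by (intro ereal_mult_left_mono) auto
      then show False using c c0 h(2)[OF x] by simp
    qed
    then obtain b where b: "c0 / h x < b" "ereal b < f x" using ereal_dense2 by force
    have b_pos: "0 < b" using b(1) c0 h(2)[OF x] by (smt (verit) divide_nonneg_pos)
    obtain U where U: "open U" "x \<in> U" "\<And>y. y \<in> U \<Longrightarrow> y \<in> S \<Longrightarrow> ereal b < f y"
      using lsc_onD_open[OF f(1) x b(2)] by blast
    obtain V where V: "open V" "V \<inter> S = h -` {c0 / b<..} \<inter> S"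
      using h(1) unfolding continuous_on_open_invariant by (meson open_greaterThan)
    have "c0 / b < h x" using b(1) b_pos h(2)[OF x] by (simp add: field_simps)
    then have "x \<in> V" using V(2) x by blast
    moreover have "c < ereal (h y) * f y" if y: "y \<in> U \<inter> V" "y \<in> S" for y
    proof -
      have "h y \<in> {c0 / b<..}" using V(2) y by blast
      then have "c0 < h y * b" using b_pos by (simp add: field_simps)
      moreover have "ereal (h y) * ereal b \<le> ereal (h y) * f y"
        using U(3)[of y] y h(2)[of y] by (intro ereal_mult_left_mono) auto
      ultimately show ?thesis using c0 by (metis less_le_trans less_ereal.simps(1) times_ereal.simps(1))
    qed
    ultimately show ?thesis using U V by (intro exI[of _ "U \<inter> V"]) auto
  qed
qed

lemma lsc_on_extend_zero:
  assumes f: "lsc_on (S \<inter> {x. P x}) f" and P: "open {x. P x}"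
    and f_nonneg: "\<And>x. x \<in> S \<Longrightarrow> P x \<Longrightarrow> 0 \<le> f x"
  shows "lsc_on S (\<lambda>x. if P x then f x else 0)"
proof (rule lsc_onI_open)
  fix x c assume x: "x \<in> S" and c: "c < (if P x then f x else 0)"
  show "\<exists>T. open T \<and> x \<in> T \<and> (\<forall>y\<in>T. y \<in> S \<longrightarrow> c < (if P y then f y else 0))"
  proof (cases "P x")
    case True
    have "x \<in> S \<inter> {x. P x}" "c < f x" using x c True by simp_all
    from lsc_onD_open[OF f this] obtain T
      where T: "open T" "x \<in> T" "\<And>y. y \<in> T \<Longrightarrow> y \<in> S \<inter> {x. P x} \<Longrightarrow> c < f y" by blast
    have "\<forall>y\<in>T \<inter> {x. P x}. y \<in> S \<longrightarrow> c < (if P y then f y else 0)" using T(3) by simp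
    moreover have "open (T \<inter> {x. P x})" using T(1) P by (rule open_Int)
    ultimately show ?thesis using T(2) True by blast
  next
    case False
    then have "c < 0" using c by simp
    then have "\<forall>y\<in>UNIV. y \<in> S \<longrightarrow> c < (if P y then f y else 0)"
      using f_nonneg by (auto intro: order.strict_trans2)
    then show ?thesis by blast
  qed
qed

lemma lsc_envelope_ge_minorant:
  assumes "lsc_on S g" "\<And>y. y \<in> S \<Longrightarrow> g y \<le> f y"
  shows "g x \<le> lsc_envelope S f x"
  unfolding lsc_envelope_def by (rule SUP_upper) (use assms in auto)

context
  fixes F :: "real \<Rightarrow> ereal"
  assumes F: "F \<in> Gamma0"
begin

lemma Gamma0_nonneg: "0 \<le> x \<Longrightarrow> 0 \<le> F x"
  using F unfolding Gamma0_def by auto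

lemma Gamma0_lsc: "lsc_on {0..} F"
  using F unfolding Gamma0_def by auto

lemma Gamma0_le_on_unit_interval:
  assumes "0 \<le> u" "u \<le> 1"
  shows "F u \<le> ereal (1 - u) * F 0"
proof -
  have "econvex_on {0..} F" "F 1 = 0" using F unfolding Gamma0_def by auto
  then have "F ((1 - u) *\<^sub>R 0 + u *\<^sub>R 1) \<le> ereal (1 - u) * F 0 + ereal u * F 1"
    unfolding econvex_on_def using assms by (meson atLeast_iff order_refl zero_le_one)
  then show ?thesis using \<open>F 1 = 0\<close> by simp
qed

text \<open>Lower semicontinuity gives the lower bound, convexity with \<open>F 1 = 0\<close> the upper one.\<close>
lemma Gamma0_tendsto_at_right_0: "(F \<longlongrightarrow> F 0) (at_right 0)"
proof (rule order_tendstoI)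
  fix c assume c: "c < F 0"
  obtain T where T: "open T" "0 \<in> T" "\<And>y. y \<in> T \<Longrightarrow> y \<in> {0..} \<Longrightarrow> c < F y"
    using lsc_onD_open[OF Gamma0_lsc _ c] by auto
  have "eventually (\<lambda>y. y \<in> T) (at_right (0::real))"
    using T(1,2) eventually_at_topological by blast
  then show "eventually (\<lambda>y. c < F y) (at_right 0)"
    using eventually_at_right_less[of 0] by eventually_elim (use T(3) in auto)
next
  fix c assume c: "F 0 < c"
  have "eventually (\<lambda>u. 0 < u \<and> u < 1) (at_right (0::real))"
    using eventually_at_right_real[of 0 "1::real"] by simp
  then show "eventually (\<lambda>u. F u < c) (at_right 0)"
  proof eventually_elim
    case (elim u)
    obtain f0 where f0: "F 0 = ereal f0" "0 \<le> f0" using c Gamma0_nonneg[of 0] by (cases "F 0") auto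
    have "F u \<le> ereal (1 - u) * F 0" using Gamma0_le_on_unit_interval elim by simp
    also have "\<dots> \<le> F 0" using f0 elim by (simp add: mult_left_le_one_le)
    finally show ?case using c by simp
  qed
qed

end

lemma Gamma0s_imp_Gamma0: "F \<in> Gamma0s \<Longrightarrow> F \<in> Gamma0"
  unfolding Gamma0s_def by simp

context
  fixes F :: "real \<Rightarrow> ereal"
  assumes F: "F \<in> Gamma0s"
begin

lemma Gamma0s_eq_reverse:
  assumes "0 < x"
  shows "F x = ereal x * F (1 / x)"
proof -
  have "F x = reverse_entropy F x" using F assms unfolding Gamma0s_def by simp
  then show ?thesis using assms unfolding reverse_entropy_def by (simp only: if_True)
qed

text \<open>\<open>F(1 + \<alpha> r)/\<alpha> = ((1 + \<alpha> r)/\<alpha>) F(1/(1 + \<alpha> r))\<close> by symmetry, and \<open>1/(1 + \<alpha> r) \<rightarrow> 0\<^sup>+\<close>.\<close>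
lemma recF_Gamma0s:
  assumes r: "0 < r"
  shows "recF F r = ereal r * F 0"
proof -
  have "eventually (\<lambda>\<alpha>. ereal ((1 + \<alpha> * r) / \<alpha>) * F (1 / (1 + \<alpha> * r)) = F (1 + \<alpha> * r) / ereal \<alpha>) at_top"
    using eventually_gt_at_top[of 0]
  proof eventually_elim
    case (elim \<alpha>)
    have "0 < 1 + \<alpha> * r" using elim r by (simp add: add_pos_pos)
    then have "F (1 + \<alpha> * r) / ereal \<alpha> = ereal (1 / \<alpha>) * (ereal (1 + \<alpha> * r) * F (1 / (1 + \<alpha> * r)))"
      using elim by (subst Gamma0s_eq_reverse) (auto simp: divide_ereal_def inverse_eq_divide mult.commute)
    then show ?case by (simp flip: mult.assoc)
  qed
  moreover have "((\<lambda>\<alpha>. ereal ((1 + \<alpha> * r) / \<alpha>) * F (1 / (1 + \<alpha> * r))) \<longlongrightarrow> ereal r * F 0) at_top"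
  proof (rule tendsto_mult_ereal)
    show "((\<lambda>\<alpha>. ereal ((1 + \<alpha> * r) / \<alpha>)) \<longlongrightarrow> ereal r) at_top"
      using r by (intro tendsto_ereal) real_asymp
    have "filterlim (\<lambda>\<alpha>::real. 1 / (1 + \<alpha> * r)) (at_right 0) at_top"
      using r by real_asymp
    then show "((\<lambda>\<alpha>. F (1 / (1 + \<alpha> * r))) \<longlongrightarrow> F 0) at_top"
      by (rule filterlim_compose[OF Gamma0_tendsto_at_right_0[OF Gamma0s_imp_Gamma0[OF F]]])
  qed (use r in auto)
  ultimately have "((\<lambda>\<alpha>. F (1 + \<alpha> * r) / ereal \<alpha>) \<longlongrightarrow> ereal r * F 0) at_top"
    using tendsto_cong by fastforce
  then show ?thesis unfolding recF_def by (rule tendsto_Lim[rotated]) simp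
qed

lemma persp_Gamma0s:
  assumes "0 < r" "0 \<le> t"
  shows "persp F r t = ereal r * F (t / r)"
proof (cases "t = 0")
  case True
  then show ?thesis using recF_Gamma0s assms by (simp add: persp_def)
next
  case False
  then have t: "0 < t" using assms by simp
  have "persp F r t = ereal t * (ereal (r / t) * F (t / r))"
    using Gamma0s_eq_reverse[of "r / t"] assms t by (simp add: persp_def)
  also have "\<dots> = ereal r * F (t / r)"
    using t by (simp flip: mult.assoc)
  finally show ?thesis .
qed

lemma persp_Gamma0s_commute:
  assumes "0 \<le> r" "0 \<le> t"
  shows "persp F r t = persp F t r"
proof -
  have swap: "persp F r t = persp F t r" if "0 < r" "0 \<le> t" for r t
  proof -
    have "persp F t r = ereal r * F (t / r)" using that(1) by (simp add: persp_def)
    with persp_Gamma0s[OF that] show ?thesis by simp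
  qed
  consider "0 < r" | "0 < t" | "r = 0" "t = 0" using assms by linarith
  then show ?thesis
    by cases (use swap[of r t] swap[of t r] assms in simp_all)
qed

lemma persp_Gamma0s_nonneg: "0 < r \<Longrightarrow> 0 \<le> t \<Longrightarrow> 0 \<le> persp F r t"
  using Gamma0_nonneg[OF Gamma0s_imp_Gamma0[OF F]] by (simp add: persp_Gamma0s)

end

text \<open>The perspective \<open>r\<^sub>1 F(r\<^sub>2/r\<^sub>1)\<close>, replaced by 0 on the axis \<open>r\<^sub>1 = 0\<close>: this keeps it a
  lower semicontinuous minorant of \<open>tildeH F\<close> without analysing the perspective near that axis.\<close>
definition truncated_persp :: "(real \<Rightarrow> ereal) \<Rightarrow> real \<times> real \<Rightarrow> ereal" where
  "truncated_persp F p = (if 0 < fst p then ereal (fst p) * F (snd p / fst p) else 0)"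

lemma truncated_persp_nonneg:
  assumes "\<And>x. 0 \<le> x \<Longrightarrow> 0 \<le> F x" "p \<in> {0..} \<times> {0..}"
  shows "0 \<le> truncated_persp F p"
  using assms by (auto simp: truncated_persp_def mult_nonneg_nonneg)

lemma lsc_on_truncated_persp:
  assumes nonneg: "\<And>x. 0 \<le> x \<Longrightarrow> 0 \<le> F x" and lsc: "lsc_on {0..} F"
  shows "lsc_on ({0..} \<times> {0..}) (truncated_persp F)"
proof -
  let ?Q = "({0..} \<times> {0..}) \<inter> {p :: real \<times> real. 0 < fst p}"
  have "continuous_on ?Q (\<lambda>p. snd p / fst p)"
    by (intro continuous_intros) auto
  moreover have "(\<lambda>p. snd p / fst p) ` ?Q \<subseteq> {0..}" by auto
  ultimately have "lsc_on ?Q (\<lambda>p. F (snd p / fst p))"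
    by (rule lsc_on_compose_continuous[OF lsc])
  then have "lsc_on ?Q (\<lambda>p. ereal (fst p) * F (snd p / fst p))"
    by (rule lsc_on_mult_continuous) (auto intro: nonneg continuous_intros)
  moreover have "open {p :: real \<times> real. 0 < fst p}"
    by (intro open_Collect_less continuous_intros)
  ultimately show ?thesis
    unfolding truncated_persp_def
    by (rule lsc_on_extend_zero) (use nonneg in \<open>auto simp: mult_nonneg_nonneg\<close>)
qed

lemma scaled_truncated_persp_le_tildeH:
  assumes F: "F \<in> Gamma0s" and a: "0 < a" "a \<le> 1"
    and tri: "\<forall>r\<ge>0. \<forall>s\<ge>0. \<forall>t\<ge>0.
           epowr (persp F r t) a \<le> epowr (persp F r s) a + epowr (persp F s t) a"
    and p: "p \<in> {0..} \<times> {0..}"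
  shows "ereal (2 powr (1 - 1/a)) * truncated_persp F p \<le> tildeH F p"
  unfolding tildeH_def
proof (rule INF_greatest)
  fix \<theta> :: real assume "\<theta> \<in> {0<..}"
  then have \<theta>: "0 < \<theta>" by simp
  obtain r1 r2 where r: "p = (r1, r2)" "0 \<le> r1" "0 \<le> r2" using p by auto
  have sum_nonneg: "0 \<le> persp F \<theta> r1 + persp F \<theta> r2"
    using persp_Gamma0s_nonneg[OF F \<theta>] r by simp
  show "ereal (2 powr (1 - 1/a)) * truncated_persp F p \<le> persp F \<theta> (fst p) + persp F \<theta> (snd p)"
  proof (cases "0 < r1")
    case False
    then show ?thesis using r sum_nonneg by (simp add: truncated_persp_def)
  next
    case True
    have "epowr (persp F r1 r2) a \<le> epowr (persp F r1 \<theta>) a + epowr (persp F \<theta> r2) a"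
      using tri r \<theta> by simp
    then have tri_\<theta>: "epowr (persp F r1 r2) a \<le> epowr (persp F \<theta> r1) a + epowr (persp F \<theta> r2) a"
      using persp_Gamma0s_commute[OF F, of r1 \<theta>] r \<theta> by simp
    have "ereal (2 powr (1 - 1/a)) * persp F r1 r2 \<le> persp F \<theta> r1 + persp F \<theta> r2"
      by (rule ereal_scaled_le_add_if_epowr_le_add_epowr[OF a _ _ _ tri_\<theta>])
         (use persp_Gamma0s_nonneg[OF F] True r \<theta> in auto)
    then show ?thesis using persp_Gamma0s[OF F True r(3)] True r by (simp add: truncated_persp_def)
  qed
qed

theorem mainTheorem3:
  fixes F :: "real \<Rightarrow> ereal" and a :: real
  assumes "F \<in> Gamma0s"
    and "0 < a" and "a \<le> 1"
    and "\<forall>r\<ge>0. \<forall>s\<ge>0. \<forall>t\<ge>0.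
           epowr (persp F r t) a \<le> epowr (persp F r s) a + epowr (persp F s t) a"
  shows "\<forall>s\<ge>0. Ta a F s \<ge> F s"
proof (intro allI impI)
  fix s :: real assume "0 \<le> s"
  define C where "C = 2 powr (1 - 1/a)"
  have F: "F \<in> Gamma0" using assms(1) by (rule Gamma0s_imp_Gamma0)
  have "lsc_on ({0..} \<times> {0..}) (\<lambda>p. ereal C * truncated_persp F p)"
    using lsc_on_truncated_persp[OF Gamma0_nonneg[OF F] Gamma0_lsc[OF F]]
    by (rule lsc_on_mult_continuous) (auto simp: C_def intro: truncated_persp_nonneg Gamma0_nonneg[OF F])
  then have "ereal C * truncated_persp F (1, s) \<le> HF F 1 s"
    unfolding HF_def C_def
    by (rule lsc_envelope_ge_minorant) (rule scaled_truncated_persp_le_tildeH[OF assms])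
  then have "ereal (2 powr (1/a - 1)) * (ereal C * F s) \<le> Ta a F s"
    unfolding Ta_def truncated_persp_def by (intro ereal_mult_left_mono) auto
  moreover have "2 powr (1/a - 1) * C = 1" by (simp add: C_def flip: powr_add)
  ultimately show "F s \<le> Ta a F s" by (simp flip: mult.assoc)
qed

end
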